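(* Let $\sigma=(\sigma_n)$ be a sequence of positive integers for which there exists $c>1$ such that $\sigma_{n+1}\ge c\,\sigma_n$ for all sufficiently large $n$. Then a nonnegative random variable $W$ is $\sigma$-summable if and only if $\sum_n F_W^{-1}(1/\sigma_n)<\infty$.
   Context: With $(W_n^j)_{n,j}$ independent copies of $W$ and $\Lambda_n=\min_{1\le j\le\sigma_n}W_n^j$, $W$ is called $\sigma$-summable if $\Pr\{\sum_n\Lambda_n<\infty\}>0$. $F_W$ is the distribution function of $W$ and $F_W^{-1}(u)=\inf\{x:F_W(x)\ge u\}$. *)

theory Defs
  imports "HOL-Probability.Probability"
begin

definition distrib_fun :: "'a measure \<Rightarrow> ('a \<Rightarrow> real) \<Rightarrow> real \<Rightarrow> real" where
  "distrib_fun M W = cdf (distr M borel W)"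

definition quantile :: "'a measure \<Rightarrow> ('a \<Rightarrow> real) \<Rightarrow> real \<Rightarrow> real" where
  "quantile M W u = Inf {x. distrib_fun M W x \<ge> u}"

text \<open>sigma-summability: on the product space carrying independent copies
  W_n^j (indexed by (n,j), j < sigma n) of W, the event that
  sum_n min_{j < sigma n} W_n^j is finite has positive probability.\<close>
definition sigma_summable :: "(nat \<Rightarrow> nat) \<Rightarrow> 'a measure \<Rightarrow> ('a \<Rightarrow> real) \<Rightarrow> bool" where
  "sigma_summable \<sigma> M W \<longleftrightarrow>
     (let P = PiM (UNIV :: (nat \<times> nat) set) (\<lambda>_. distr M borel W) in
      measure P {\<omega> \<in> space P. summable (\<lambda>n. Min ((\<lambda>j. \<omega> (n, j)) ` {..<\<sigma> n}))} > 0)"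

end

theory Submission
  imports Defs
begin

(*
  Let mu be the law of W >= 0, Q u = Inf {x. u <= F x} its quantile function, and on the
  product space P of i.i.d. mu-coordinates w(n,j) put L n = min_{j < sigma n} w(n,j).
  Since P {t < L n} = (1 - F t) ^ sigma n, the first Borel-Cantelli lemma gives
  (a) if sum_n (1 - F(t n)) ^ sigma n < oo then a.s. eventually L n <= t n, and
  (b) if sum_n (1 - (1 - F(t n)) ^ sigma n) < oo then a.s. eventually t n < L n.
  Geometric growth of sigma makes both series geometric for the thresholds
    t n = Q (1 / sigma (n div 2))   in (a), using (1 - 1/s)^t <= s/t, and
    t n = Q (1 / sigma (2 n)) / 2   in (b), using Bernoulli's inequality.
  Hence summable Q(1/sigma n) forces summable L a.s., and non-summability forces
  non-summability of L a.s. (passing between n and n div 2 or 2n by monotonicity of Q).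
  So the event {summable L} has probability 1 or 0, which is the corollary.
*)

text \<open>The tail estimate used for the upper thresholds: with probability at least \<open>1/s\<close>
  per trial, all of \<open>t\<close> independent trials fail with probability at most \<open>s/t\<close>.\<close>

lemma one_minus_inverse_power_le:
  fixes s :: real and t :: nat
  assumes "1 \<le> s" "0 < t"
  shows "(1 - 1/s) ^ t \<le> s / t"
proof -
  have "1 - 1/s \<le> exp (-(1/s))" using exp_ge_add_one_self[of "-(1/s)"] by simp
  moreover have "0 \<le> 1 - 1/s" using assms by (simp add: field_simps)
  ultimately have "(1 - 1/s) ^ t \<le> exp (-(1/s)) ^ t" by (rule power_mono)
  also have "\<dots> = 1 / exp (t/s)"
    by (simp add: exp_of_nat_mult[symmetric] exp_minus field_simps)
  also have "\<dots> \<le> 1 / (t/s)"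
  proof (rule divide_left_mono)
    show "t/s \<le> exp (t/s)" using exp_ge_add_one_self[of "t/s"] by linarith
    show "0 < exp (t/s) * (t/s)" using assms by auto
  qed simp
  finally show ?thesis by simp
qed

lemma summable_comp_div2:
  fixes f :: "nat \<Rightarrow> real"
  assumes "summable f"
  shows "summable (\<lambda>n. f (n div 2))"
proof -
  define evens where "evens n = (if even n then f (n div 2) else 0)" for n
  define odds where "odds n = (if odd n then f (n div 2) else 0)" for n
  have "summable (\<lambda>n. evens (2 * n))" using assms by (simp add: evens_def)
  moreover have "strict_mono (\<lambda>n::nat. 2 * n)" by (auto simp: strict_mono_def)
  moreover have "\<And>n. n \<notin> range (\<lambda>n::nat. 2 * n) \<Longrightarrow> evens n = 0"
    by (auto simp: evens_def elim!: evenE)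
  ultimately have "summable evens" using summable_mono_reindex by blast
  have "summable (\<lambda>n. odds (2 * n + 1))" using assms by (simp add: odds_def)
  moreover have "strict_mono (\<lambda>n::nat. 2 * n + 1)" by (auto simp: strict_mono_def)
  moreover have "\<And>n. n \<notin> range (\<lambda>n::nat. 2 * n + 1) \<Longrightarrow> odds n = 0"
    by (auto simp: odds_def elim!: oddE)
  ultimately have "summable odds" using summable_mono_reindex by blast
  have "(\<lambda>n. f (n div 2)) = (\<lambda>n. evens n + odds n)" by (auto simp: evens_def odds_def)
  then show ?thesis using summable_add[OF \<open>summable evens\<close> \<open>summable odds\<close>] by simp
qed

lemma summable_from_even_terms:
  fixes f :: "nat \<Rightarrow> real"
  assumes even_terms: "summable (\<lambda>n. f (2 * n))"
    and antitone: "\<And>m n. N \<le> m \<Longrightarrow> m \<le> n \<Longrightarrow> f n \<le> f m"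
    and nonneg: "\<And>n. N \<le> n \<Longrightarrow> 0 \<le> f n"
  shows "summable f"
proof (rule summable_comparison_test_ev)
  show "summable (\<lambda>n. f (2 * (n div 2)))"
    using summable_comp_div2[OF even_terms] by simp
  show "\<forall>\<^sub>F n in sequentially. norm (f n) \<le> f (2 * (n div 2))"
    using eventually_ge_at_top[of "2 * N + 1"]
  proof eventually_elim
    case (elim n)
    then show ?case using antitone[of "2 * (n div 2)" n] nonneg[of n] by auto
  qed
qed

locale geometric_growth =
  fixes \<sigma> :: "nat \<Rightarrow> nat" and c :: real and N :: nat
  assumes pos: "\<And>n. 0 < \<sigma> n"
    and c_gt_1: "1 < c"
    and step: "\<And>n. N \<le> n \<Longrightarrow> c * \<sigma> n \<le> \<sigma> (Suc n)"
begin

lemma power_growth: "N \<le> m \<Longrightarrow> c ^ k * \<sigma> m \<le> \<sigma> (m + k)"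
proof (induction k)
  case (Suc k)
  have "c ^ Suc k * \<sigma> m = c * (c ^ k * \<sigma> m)" by simp
  also have "\<dots> \<le> c * \<sigma> (m + k)" using Suc c_gt_1 by (intro mult_left_mono) auto
  also have "\<dots> \<le> \<sigma> (Suc (m + k))" using step Suc.prems by auto
  finally show ?case by simp
qed simp

lemma ratio_le: "N \<le> m \<Longrightarrow> m \<le> n \<Longrightarrow> \<sigma> m / \<sigma> n \<le> (1 / c) ^ (n - m)"
  using power_growth[of m "n - m"] pos[of n] c_gt_1
  by (simp add: field_simps power_divide)

lemma tail_mono:
  assumes "N \<le> m" "m \<le> n"
  shows "\<sigma> m \<le> \<sigma> n"
proof -
  have "real (\<sigma> m) / \<sigma> n \<le> (1 / c) ^ (n - m)" using ratio_le assms .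
  also have "\<dots> \<le> 1" using c_gt_1 by (intro power_le_one) auto
  finally show ?thesis using pos[of n] by (simp add: divide_le_eq_1)
qed

lemma gt_one: "N < n \<Longrightarrow> 1 < \<sigma> n"
proof -
  assume "N < n"
  have "1 * real (\<sigma> N) < c ^ (n - N) * \<sigma> N"
    using c_gt_1 pos[of N] \<open>N < n\<close> by (intro mult_strict_right_mono one_less_power) auto
  also have "\<dots> \<le> \<sigma> n" using power_growth[of N "n - N"] \<open>N < n\<close> by simp
  finally show ?thesis using pos[of N] by linarith
qed

text \<open>The two ratio bounds that make the Borel-Cantelli series geometric.\<close>

lemma ratio_double_le: "N \<le> n \<Longrightarrow> \<sigma> n / \<sigma> (2 * n) \<le> (1 / c) ^ n"
  using ratio_le[of n "2 * n"] by simp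

lemma ratio_half_le: "N \<le> n div 2 \<Longrightarrow> \<sigma> (n div 2) / \<sigma> n \<le> (1 / sqrt c) ^ n"
proof -
  assume "N \<le> n div 2"
  define k where "k = n - n div 2"
  have "\<sigma> (n div 2) / \<sigma> n \<le> (1 / c) ^ k"
    using ratio_le[OF \<open>N \<le> n div 2\<close>] by (simp add: k_def)
  also have "\<dots> = (1 / sqrt c) ^ (2 * k)"
    using c_gt_1 by (simp add: power_mult power_divide real_sqrt_pow2)
  also have "\<dots> \<le> (1 / sqrt c) ^ n"
    using c_gt_1 by (intro power_decreasing) (auto simp: k_def)
  finally show ?thesis .
qed

end

lemma obtain_geometric_growth:
  assumes "\<And>n. 0 < \<sigma> n"
    and "\<exists>c::real > 1. \<forall>\<^sub>F n in sequentially. real (\<sigma> (Suc n)) \<ge> c * real (\<sigma> n)"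
  obtains c N where "geometric_growth \<sigma> c N"
  using assms unfolding geometric_growth_def eventually_sequentially by blast

section \<open>Quantile function of a nonnegative distribution\<close>

locale nonneg_real_distribution = real_distribution M for M +
  assumes no_negative_mass: "measure M {..<0} = 0"
begin

definition inv_cdf :: "real \<Rightarrow> real" where
  "inv_cdf u = Inf {x. u \<le> cdf M x}"

lemma cdf_neg: "x < 0 \<Longrightarrow> cdf M x = 0"
proof -
  assume "x < 0"
  then have "cdf M x \<le> measure M {..<0}" unfolding cdf_def
    by (intro finite_measure_mono) auto
  then show ?thesis using no_negative_mass cdf_nonneg[of x] by simp
qed

lemma quantile_set:
  assumes "0 < u" "u < 1"
  shows "{x. u \<le> cdf M x} \<noteq> {}" and "\<And>x. u \<le> cdf M x \<Longrightarrow> 0 \<le> x"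
proof -
  have "\<forall>\<^sub>F x in at_top. u < cdf M x"
    using cdf_lim_at_top_prob assms(2) by (rule order_tendstoD)
  then obtain x where "u < cdf M x" by (metis eventually_at_top_linorder order_refl)
  then show "{x. u \<le> cdf M x} \<noteq> {}" by (auto intro: less_imp_le)
  show "\<And>x. u \<le> cdf M x \<Longrightarrow> 0 \<le> x" using cdf_neg assms by (metis linorder_not_less)
qed

lemma quantile_bdd_below: "0 < u \<Longrightarrow> u < 1 \<Longrightarrow> bdd_below {x. u \<le> cdf M x}"
  using quantile_set(2) by (intro bdd_belowI) auto

lemma inv_cdf_nonneg: "0 < u \<Longrightarrow> u < 1 \<Longrightarrow> 0 \<le> inv_cdf u"
  unfolding inv_cdf_def using quantile_set by (intro cInf_greatest) auto

lemma cdf_less_if_less_inv_cdf: "0 < u \<Longrightarrow> u < 1 \<Longrightarrow> x < inv_cdf u \<Longrightarrow> cdf M x < u"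
  unfolding inv_cdf_def using quantile_bdd_below
  by (metis cInf_lower linorder_not_le mem_Collect_eq)

text \<open>By right continuity of the distribution function the infimum is attained.\<close>

lemma le_cdf_inv_cdf:
  assumes "0 < u" "u < 1"
  shows "u \<le> cdf M (inv_cdf u)"
proof (rule tendsto_lowerbound)
  show "(cdf M \<longlongrightarrow> cdf M (inv_cdf u)) (at_right (inv_cdf u))"
    using cdf_is_right_cont by (simp add: continuous_within)
  have "u \<le> cdf M y" if "inv_cdf u < y" for y
  proof -
    obtain s where "u \<le> cdf M s" "s < y"
      using cInf_lessD[OF quantile_set(1)[OF assms]] \<open>inv_cdf u < y\<close>
      unfolding inv_cdf_def by auto
    then show ?thesis using cdf_nondecreasing[of s y] by auto
  qed
  then show "\<forall>\<^sub>F y in at_right (inv_cdf u). u \<le> cdf M y"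
    using eventually_at_right_less[of "inv_cdf u"] by (rule eventually_mono[rotated]) auto
qed simp

lemma inv_cdf_mono: "0 < u \<Longrightarrow> u \<le> v \<Longrightarrow> v < 1 \<Longrightarrow> inv_cdf u \<le> inv_cdf v"
  unfolding inv_cdf_def using quantile_set[of v] quantile_bdd_below[of u]
  by (intro cInf_superset_mono) auto

end

lemma nonneg_real_distribution_distr:
  assumes "prob_space M" "W \<in> borel_measurable M" "\<And>\<omega>. \<omega> \<in> space M \<Longrightarrow> 0 \<le> W \<omega>"
  shows "nonneg_real_distribution (distr M borel W)"
proof -
  interpret prob_space M by fact
  have "W -` {..<0} \<inter> space M = {}" using assms(3) by force
  then have "measure (distr M borel W) {..<0} = 0" using assms(2) by (simp add: measure_distr)
  then show ?thesis using assms(2)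
    by (simp add: nonneg_real_distribution_def nonneg_real_distribution_axioms_def)
qed

section \<open>Minima over blocks of independent copies\<close>

locale block_minima = nonneg_real_distribution M for M +
  fixes \<sigma> :: "nat \<Rightarrow> nat"
  assumes block_pos: "\<And>n. 0 < \<sigma> n"
begin

definition P :: "(nat \<times> nat \<Rightarrow> real) measure" where
  "P = PiM UNIV (\<lambda>_. M)"

definition block_min :: "(nat \<times> nat \<Rightarrow> real) \<Rightarrow> nat \<Rightarrow> real" where
  "block_min \<omega> n = Min ((\<lambda>j. \<omega> (n, j)) ` {..<\<sigma> n})"

sublocale P: prob_space P
  unfolding P_def by (intro prob_space_PiM) (simp add: prob_space_axioms)

lemma space_P: "space P = UNIV"
  by (simp add: P_def space_PiM PiE_def extensional_def)

lemma coordinate_event: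
  assumes "finite J" "\<And>i. i \<in> J \<Longrightarrow> A i \<in> sets borel"
  shows "{\<omega>. \<forall>i\<in>J. \<omega> i \<in> A i} \<in> sets P"
    and "measure P {\<omega>. \<forall>i\<in>J. \<omega> i \<in> A i} = (\<Prod>i\<in>J. measure M (A i))"
proof -
  have eq: "{\<omega>. \<forall>i\<in>J. \<omega> i \<in> A i} = prod_emb UNIV (\<lambda>_. M) J (Pi\<^sub>E J A)"
    by (auto simp: prod_emb_def PiE_def extensional_def Pi_iff)
  show "{\<omega>. \<forall>i\<in>J. \<omega> i \<in> A i} \<in> sets P"
    unfolding eq P_def using assms by (intro sets_PiM_I) auto
  have "emeasure P {\<omega>. \<forall>i\<in>J. \<omega> i \<in> A i} = (\<Prod>i\<in>J. emeasure M (A i))"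
    unfolding eq P_def using assms by (intro emeasure_PiM_emb) (auto simp: prob_space_axioms)
  also have "\<dots> = ennreal (\<Prod>i\<in>J. measure M (A i))"
    by (simp add: emeasure_eq_measure prod_ennreal)
  finally show "measure P {\<omega>. \<forall>i\<in>J. \<omega> i \<in> A i} = (\<Prod>i\<in>J. measure M (A i))"
    by (simp add: measure_def prod_nonneg)
qed

lemma less_block_min_iff: "t < block_min \<omega> n \<longleftrightarrow> (\<forall>j<\<sigma> n. t < \<omega> (n, j))"
  unfolding block_min_def using block_pos[of n] by (subst Min_gr_iff) auto

lemma le_block_min_iff: "t \<le> block_min \<omega> n \<longleftrightarrow> (\<forall>j<\<sigma> n. t \<le> \<omega> (n, j))"
  unfolding block_min_def using block_pos[of n] by (subst Min_ge_iff) auto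

lemma block_min_event:
  "{\<omega>. t < block_min \<omega> n} \<in> sets P"
  "measure P {\<omega>. t < block_min \<omega> n} = (1 - cdf M t) ^ \<sigma> n"
proof -
  have eq: "{\<omega>. t < block_min \<omega> n} = {\<omega>. \<forall>i\<in>{n} \<times> {..<\<sigma> n}. \<omega> i \<in> {t<..}}"
    by (auto simp: less_block_min_iff)
  show "{\<omega>. t < block_min \<omega> n} \<in> sets P"
    unfolding eq by (rule coordinate_event) auto
  have "measure M {t<..} = 1 - cdf M t"
    using prob_compl[of "{..t}"] by (simp add: cdf_def Compl_eq_Diff_UNIV[symmetric])
  then show "measure P {\<omega>. t < block_min \<omega> n} = (1 - cdf M t) ^ \<sigma> n"
    unfolding eq by (subst coordinate_event) (auto simp: card_cartesian_product)
qed

lemma AE_eventually_less_block_min: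
  assumes "summable (\<lambda>n. 1 - (1 - cdf M (t n)) ^ \<sigma> n)"
  shows "AE \<omega> in P. \<forall>\<^sub>F n in sequentially. t n < block_min \<omega> n"
proof -
  define E where "E n = space P - {\<omega>. t n < block_min \<omega> n}" for n
  have E_sets: "E n \<in> sets P" for n
    unfolding E_def by (rule sets.compl_sets) (rule block_min_event(1))
  have "measure P (E n) = 1 - (1 - cdf M (t n)) ^ \<sigma> n" for n
    unfolding E_def using block_min_event by (simp add: P.prob_compl)
  then have "AE \<omega> in P. \<forall>\<^sub>F n in sequentially. \<omega> \<in> space P - E n"
    using assms E_sets by (intro borel_cantelli_AE1) (auto simp: P.emeasure_eq_measure)
  then show ?thesis by (simp add: E_def space_P)
qed

lemma AE_eventually_block_min_le:
  assumes "summable (\<lambda>n. (1 - cdf M (t n)) ^ \<sigma> n)"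
  shows "AE \<omega> in P. \<forall>\<^sub>F n in sequentially. block_min \<omega> n \<le> t n"
proof -
  have "AE \<omega> in P. \<forall>\<^sub>F n in sequentially. \<omega> \<in> space P - {\<omega>. t n < block_min \<omega> n}"
    using assms block_min_event
    by (intro borel_cantelli_AE1) (auto simp: P.emeasure_eq_measure)
  then show ?thesis by (simp add: not_less space_P)
qed

lemma AE_block_min_nonneg: "AE \<omega> in P. \<forall>n. 0 \<le> block_min \<omega> n"
proof -
  have "AE \<omega> in P. 0 \<le> \<omega> i" for i :: "nat \<times> nat"
  proof -
    have "measure P {\<omega>. \<forall>i'\<in>{i}. \<omega> i' \<in> {..<0}} = 0"
      using no_negative_mass by (subst coordinate_event) auto
    then have "AE \<omega> in P. \<omega> \<notin> {\<omega>. \<forall>i'\<in>{i}. \<omega> i' \<in> {..<0}}"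
      using coordinate_event(1)[of "{i}" "\<lambda>_. {..<0}"] by (simp add: P.prob_eq_0)
    then show ?thesis by (rule eventually_mono) auto
  qed
  then have "AE \<omega> in P. \<forall>i. 0 \<le> \<omega> i" by (simp add: AE_all_countable)
  then show ?thesis
    by (rule eventually_mono) (auto simp: le_block_min_iff)
qed

lemma summable_block_min_event: "{\<omega> \<in> space P. summable (block_min \<omega>)} \<in> sets P"
proof -
  have "{\<omega> \<in> space P. summable (block_min \<omega>)}
      = {\<omega> \<in> space P. Cauchy (\<lambda>m. \<Sum>n<m. block_min \<omega> n)}"
    unfolding summable_iff_convergent Cauchy_convergent_iff ..
  also have "\<dots> \<in> sets P"
    unfolding block_min_def P_def by measurable
  finally show ?thesis .
qed

end

section \<open>The zero-one law for geometrically growing block sizes\<close>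

locale geometric_block_minima = block_minima M \<sigma> + geometric_growth \<sigma> c N
  for M \<sigma> c N
begin

abbreviation Q :: "nat \<Rightarrow> real" where
  "Q n \<equiv> inv_cdf (1 / \<sigma> n)"

lemma level_bounds: "N < n \<Longrightarrow> 0 < 1 / real (\<sigma> n) \<and> 1 / real (\<sigma> n) < 1"
  using gt_one[of n] by simp

lemma Q_nonneg: "N < n \<Longrightarrow> 0 \<le> Q n"
  using level_bounds[of n] by (intro inv_cdf_nonneg) auto

lemma Q_antitone: "N < m \<Longrightarrow> m \<le> n \<Longrightarrow> Q n \<le> Q m"
  using level_bounds[of m] level_bounds[of n] tail_mono[of m n] pos[of m]
  by (intro inv_cdf_mono) (auto simp: frac_le)

text \<open>If the quantiles are summable, then almost surely so are the block minima:
  eventually \<open>block_min \<omega> n \<le> Q (n div 2)\<close>.\<close>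

lemma AE_summable_block_min:
  assumes "summable Q"
  shows "AE \<omega> in P. summable (block_min \<omega>)"
proof -
  define a where "a n = Q (n div 2)" for n
  have tail: "(1 - cdf M (a n)) ^ \<sigma> n \<le> (1 / sqrt c) ^ n" if "2 * N + 2 \<le> n" for n
  proof -
    define s where "s = real (\<sigma> (n div 2))"
    have "N < n div 2" using that by auto
    then have "1 / s \<le> cdf M (a n)"
      unfolding a_def s_def using level_bounds[of "n div 2"] by (intro le_cdf_inv_cdf) auto
    then have "(1 - cdf M (a n)) ^ \<sigma> n \<le> (1 - 1 / s) ^ \<sigma> n"
      using cdf_bounded_prob by (intro power_mono) auto
    also have "\<dots> \<le> s / \<sigma> n"
      using gt_one[OF \<open>N < n div 2\<close>] pos[of n] by (intro one_minus_inverse_power_le) (auto simp: s_def)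
    also have "\<dots> \<le> (1 / sqrt c) ^ n"
      unfolding s_def using \<open>N < n div 2\<close> by (intro ratio_half_le) simp
    finally show ?thesis .
  qed
  have "summable (\<lambda>n. (1 - cdf M (a n)) ^ \<sigma> n)"
  proof (rule summable_comparison_test_ev)
    show "\<forall>\<^sub>F n in sequentially. norm ((1 - cdf M (a n)) ^ \<sigma> n) \<le> (1 / sqrt c) ^ n"
      using eventually_ge_at_top[of "2 * N + 2"]
    proof eventually_elim
      case (elim n)
      have "0 \<le> 1 - cdf M (a n)" using cdf_bounded_prob by simp
      then show ?case using tail[OF elim] by simp
    qed
    show "summable (\<lambda>n. (1 / sqrt c) ^ n)" using c_gt_1 by (intro summable_geometric) auto
  qed
  then have "AE \<omega> in P. \<forall>\<^sub>F n in sequentially. block_min \<omega> n \<le> a n"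
    by (rule AE_eventually_block_min_le)
  then have "AE \<omega> in P. (\<forall>\<^sub>F n in sequentially. block_min \<omega> n \<le> a n)
      \<and> (\<forall>n. 0 \<le> block_min \<omega> n)"
    using AE_block_min_nonneg by (rule eventually_conj)
  moreover have "summable a" unfolding a_def using assms by (rule summable_comp_div2)
  ultimately show ?thesis
  proof (elim eventually_mono conjE)
    fix \<omega> assume upper: "\<forall>\<^sub>F n in sequentially. block_min \<omega> n \<le> a n"
      and nonneg: "\<forall>n. 0 \<le> block_min \<omega> n" and "summable a"
    have "\<forall>\<^sub>F n in sequentially. norm (block_min \<omega> n) \<le> a n"
      using upper by (rule eventually_mono) (use nonneg in simp)
    then show "summable (block_min \<omega>)" using \<open>summable a\<close> by (rule summable_comparison_test_ev)
  qed
qed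

text \<open>If the quantiles are not summable, they are eventually positive, and almost surely
  eventually \<open>Q (2 n) / 2 < block_min \<omega> n\<close>, so the block minima are not summable either.\<close>

lemma AE_not_summable_block_min:
  assumes not_summable: "\<not> summable Q"
  shows "AE \<omega> in P. \<not> summable (block_min \<omega>)"
proof -
  have Q_pos: "0 < Q n" if "N < n" for n
  proof (rule ccontr)
    assume "\<not> 0 < Q n"
    have "\<forall>\<^sub>F k in sequentially. norm (Q k) \<le> 0"
      using eventually_ge_at_top[of n]
      by eventually_elim (use \<open>\<not> 0 < Q n\<close> that Q_nonneg Q_antitone in \<open>force simp: not_less\<close>)
    then have "summable Q" by (rule summable_comparison_test_ev) simp
    with not_summable show False ..
  qed
  define b where "b n = Q (2 * n) / 2" for n
  have tail: "1 - (1 - cdf M (b n)) ^ \<sigma> n \<le> (1 / c) ^ n" if "N < n" for n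
  proof -
    have "1 - (1 - cdf M (b n)) ^ \<sigma> n \<le> \<sigma> n * cdf M (b n)"
      using Bernoulli_inequality[of "- cdf M (b n)" "\<sigma> n"] cdf_bounded_prob[of "b n"] by simp
    also have "\<dots> \<le> \<sigma> n * (1 / \<sigma> (2 * n))"
    proof -
      have "b n < Q (2 * n)" using Q_pos[of "2 * n"] that by (simp add: b_def)
      then have "cdf M (b n) < 1 / \<sigma> (2 * n)"
        using level_bounds[of "2 * n"] that by (intro cdf_less_if_less_inv_cdf) auto
      then show ?thesis by (intro mult_left_mono) auto
    qed
    also have "\<dots> \<le> (1 / c) ^ n" using ratio_double_le[of n] that by simp
    finally show ?thesis .
  qed
  have "summable (\<lambda>n. 1 - (1 - cdf M (b n)) ^ \<sigma> n)"
  proof (rule summable_comparison_test_ev)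
    have at_most_one: "(1 - cdf M x) ^ k \<le> 1" for x k
      using cdf_nonneg[of x] cdf_bounded_prob[of x] by (intro power_le_one) auto
    show "\<forall>\<^sub>F n in sequentially. norm (1 - (1 - cdf M (b n)) ^ \<sigma> n) \<le> (1 / c) ^ n"
      using eventually_gt_at_top[of N] by eventually_elim (use tail at_most_one in simp)
    show "summable (\<lambda>n. (1 / c) ^ n)" using c_gt_1 by (intro summable_geometric) auto
  qed
  then have "AE \<omega> in P. \<forall>\<^sub>F n in sequentially. b n < block_min \<omega> n"
    by (rule AE_eventually_less_block_min)
  then show ?thesis
  proof (rule eventually_mono)
    fix \<omega> assume lower: "\<forall>\<^sub>F n in sequentially. b n < block_min \<omega> n"
    show "\<not> summable (block_min \<omega>)"
    proof
      assume "summable (block_min \<omega>)"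
      moreover have "\<forall>\<^sub>F n in sequentially. norm (b n) \<le> block_min \<omega> n"
        using lower eventually_gt_at_top[of N]
      proof eventually_elim
        case (elim n)
        then show ?case using Q_nonneg[of "2 * n"] by (simp add: b_def)
      qed
      ultimately have "summable b" by (rule summable_comparison_test_ev[rotated])
      then have "summable (\<lambda>n. Q (2 * n))"
        using summable_mult[of b 2] by (simp add: b_def)
      then have "summable Q"
      proof (rule summable_from_even_terms[where N = "Suc N"])
        show "Q n \<le> Q m" if "Suc N \<le> m" "m \<le> n" for m n using that by (intro Q_antitone) auto
        show "0 \<le> Q n" if "Suc N \<le> n" for n using that by (intro Q_nonneg) auto
      qed
      with not_summable show False ..
    qed
  qed
qed

theorem prob_summable_block_min:
  "measure P {\<omega> \<in> space P. summable (block_min \<omega>)} = (if summable Q then 1 else 0)"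
proof (cases "summable Q")
  case True
  then have "AE \<omega> in P. summable (block_min \<omega>)" by (rule AE_summable_block_min)
  then show ?thesis
    using True P.prob_Collect_eq_1[OF summable_block_min_event] by simp
next
  case False
  then have "AE \<omega> in P. \<not> summable (block_min \<omega>)" by (rule AE_not_summable_block_min)
  then show ?thesis
    using False P.prob_Collect_eq_0[OF summable_block_min_event] by simp
qed

end

theorem corollary4p3:
  fixes M :: "'a measure" and W :: "'a \<Rightarrow> real" and \<sigma> :: "nat \<Rightarrow> nat"
  assumes "prob_space M"
    and "W \<in> borel_measurable M"
    and "\<And>\<omega>. \<omega> \<in> space M \<Longrightarrow> W \<omega> \<ge> 0"
    and "\<And>n. \<sigma> n > 0"
    and "\<exists>c::real > 1. \<forall>\<^sub>F n in sequentially. real (\<sigma> (Suc n)) \<ge> c * real (\<sigma> n)"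
  shows "sigma_summable \<sigma> M W \<longleftrightarrow> summable (\<lambda>n. quantile M W (1 / real (\<sigma> n)))"
proof -
  define \<mu> where "\<mu> = distr M borel W"
  obtain c N where growth: "geometric_growth \<sigma> c N"
    using obtain_geometric_growth assms(4,5) by blast
  interpret geometric_block_minima \<mu> \<sigma> c N
    unfolding geometric_block_minima_def block_minima_def block_minima_axioms_def \<mu>_def
    using nonneg_real_distribution_distr[OF assms(1-3)] assms(4) growth by blast
  have "quantile M W u = inv_cdf u" for u
    unfolding quantile_def distrib_fun_def inv_cdf_def \<mu>_def[symmetric] ..
  moreover have "sigma_summable \<sigma> M W \<longleftrightarrow> 0 < measure P {\<omega> \<in> space P. summable (block_min \<omega>)}"
    unfolding sigma_summable_def Let_def P_def block_min_def \<mu>_def[symmetric] ..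
  ultimately show ?thesis using prob_summable_block_min by simp
qed

end
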